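(* For every $k \in \mathbb{N}$ and every minimally unsatisfiable clause-set $F$ with $\delta(F) \le k$ and $F \neq \{\bot\}$ we have $\mathrm{minvdeg}(F) \le \mathrm{N}(k)$. More precisely, there exists a variable $v \in \mathrm{var}(F)$ with $\mathrm{vdeg}_F(v) \le \mathrm{N}(k)$ and $\mathrm{ld}_F(v) \le k$, $\mathrm{ld}_F(\overline{v}) \le k$.
   Context: Literals come with a fixed-point-free involution $x \mapsto \overline{x}$ (complementation); variables are the positive literals, and $\mathrm{var}(x)$ is the underlying variable of a literal $x$. A clause is a finite set $C$ of literals with $C \cap \overline{C} = \emptyset$, where $\overline{L} = \{\overline{x} : x \in L\}$; a clause-set is a finite set of clauses. $\bot$ is the empty clause. For a clause-set $F$: $\mathrm{var}(F)$ is the set of variables occurring in $F$, $n(F) = |\mathrm{var}(F)|$, $c(F) = |F|$, and the deficiency is $\delta(F) = c(F) - n(F)$. A partial assignment is a map $\varphi : V \to \{0,1\}$ for a finite set $V$ of variables, extended to literals by $\varphi(\overline{v}) = 1 - \varphi(v)$; $F$ is satisfiable iff there is a partial assignment $\varphi$ such that every clause of $F$ contains a literal $x$ with $\varphi(x) = 1$. $F$ is minimally unsatisfiable if $F$ is unsatisfiable and $F \setminus \{C\}$ is satisfiable for every $C \in F$. The literal degree $\mathrm{ld}_F(x)$ is the number of clauses of $F$ containing $x$; the variable degree is $\mathrm{vdeg}_F(v) = \mathrm{ld}_F(v) + \mathrm{ld}_F(\overline{v})$; $\mathrm{minvdeg}(F) = \min_{v \in \mathrm{var}(F)} \mathrm{vdeg}_F(v)$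 if $n(F) > 0$ and $+\infty$ otherwise. The function $\mathrm{N} : \mathbb{N} \to \mathbb{N}$ (non-Mersenne numbers) is defined recursively by $\mathrm{N}(1) = 2$ and, for $k \ge 2$, $\mathrm{N}(k) = \max_{i \in \{2,\dots,k\}} \min(2i, \mathrm{N}(k-i+1) + i)$. Here $\mathbb{N} = \{1,2,\dots\}$. *)

theory Defs
  imports Main "HOL-Library.Extended_Nat"
begin

datatype 'v lit = Pos 'v | Neg 'v

fun comp :: "'v lit \<Rightarrow> 'v lit" where
  "comp (Pos v) = Neg v"
| "comp (Neg v) = Pos v"

fun var :: "'v lit \<Rightarrow> 'v" where
  "var (Pos v) = v"
| "var (Neg v) = v"

definition is_clause :: "'v lit set \<Rightarrow> bool" where
  "is_clause C \<longleftrightarrow> finite C \<and> C \<inter> comp ` C = {}"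

definition is_clause_set :: "'v lit set set \<Rightarrow> bool" where
  "is_clause_set F \<longleftrightarrow> finite F \<and> (\<forall>C\<in>F. is_clause C)"

definition vars :: "'v lit set set \<Rightarrow> 'v set" where
  "vars F = var ` (\<Union>F)"

definition deficiency :: "'v lit set set \<Rightarrow> int" where
  "deficiency F = int (card F) - int (card (vars F))"

fun lit_val :: "('v \<rightharpoonup> bool) \<Rightarrow> 'v lit \<Rightarrow> bool option" where
  "lit_val \<phi> (Pos v) = \<phi> v"
| "lit_val \<phi> (Neg v) = map_option Not (\<phi> v)"

definition satisfiable :: "'v lit set set \<Rightarrow> bool" where
  "satisfiable F \<longleftrightarrow> (\<exists>\<phi>. finite (dom \<phi>) \<and> (\<forall>C\<in>F. \<exists>x\<in>C. lit_val \<phi> x = Some True))"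

definition min_unsat :: "'v lit set set \<Rightarrow> bool" where
  "min_unsat F \<longleftrightarrow> is_clause_set F \<and> \<not> satisfiable F \<and> (\<forall>C\<in>F. satisfiable (F - {C}))"

definition ld :: "'v lit set set \<Rightarrow> 'v lit \<Rightarrow> nat" where
  "ld F x = card {C \<in> F. x \<in> C}"

definition vdeg :: "'v lit set set \<Rightarrow> 'v \<Rightarrow> nat" where
  "vdeg F v = ld F (Pos v) + ld F (Neg v)"

definition minvdeg :: "'v lit set set \<Rightarrow> enat" where
  "minvdeg F = (if vars F = {} then \<infinity> else enat (Min (vdeg F ` vars F)))"

text \<open>Non-Mersenne numbers; only meaningful for k \<ge> 1 (the value at 0 is a dummy).\<close>
function NM :: "nat \<Rightarrow> nat" where
  "NM k = (if k \<le> 1 then 2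
           else Max ((\<lambda>i. min (2 * i) (NM (k - i + 1) + i)) ` {2..k}))"
  by auto
termination
  by (relation "measure id") auto

end

(*
  Enlarge the clauses of F as far as possible while keeping F minimally unsatisfiable with the
  same variables. The resulting saturated clause-set S has the same deficiency k, and its literal
  degrees bound those of F. Let v be a variable of minimal degree in S and x its more frequent
  literal, occurring i times. Setting x true gives a clause-set which, by saturation, is again
  minimally unsatisfiable and, by minimality of the degree of v, loses only the variable v; so its
  deficiency is k - i + 1, which is positive by Tarsi's lemma, whence i <= k. No degree drops by
  more than i, so induction on the deficiency gives deg v <= N(k - i + 1) + i, and deg v <= 2i
  trivially; for i >= 2 this is one of the terms of the maximum defining N(k).
*)

theory Submission
  imports Defs
begin

declare NM.simps [simp del]

lemma var_comp [simp]: "var (comp x) = var x"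
  by (cases x) auto

lemma comp_comp [simp]: "comp (comp x) = x"
  by (cases x) auto

lemma comp_neq [simp]: "comp x \<noteq> x" "x \<noteq> comp x"
  by (cases x; simp)+

lemma var_eq_cases: "var y = var x \<Longrightarrow> y = x \<or> y = comp x"
  by (cases x; cases y) auto

lemma var_eq_PosNeg: "var z = v \<longleftrightarrow> z = Pos v \<or> z = Neg v"
  by (cases z) auto

lemma var_in_image_iff: "v \<in> var ` C \<longleftrightarrow> Pos v \<in> C \<or> Neg v \<in> C"
  unfolding image_iff by (metis var_eq_PosNeg)

lemma is_clause_comp_notin: "is_clause C \<Longrightarrow> x \<in> C \<Longrightarrow> comp x \<notin> C"
  unfolding is_clause_def by (metis disjoint_iff imageI)

lemma is_clause_set_finite_vars: "is_clause_set F \<Longrightarrow> finite (vars F)"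
  unfolding is_clause_set_def is_clause_def vars_def by auto

lemma is_clause_set_subset: "is_clause_set F \<Longrightarrow> G \<subseteq> F \<Longrightarrow> is_clause_set G"
  unfolding is_clause_set_def by (auto intro: finite_subset)

lemma is_clause_subset: "is_clause C \<Longrightarrow> D \<subseteq> C \<Longrightarrow> is_clause D"
  unfolding is_clause_def by (auto intro: finite_subset)

lemma is_clause_set_image_shrink:
  assumes "is_clause_set F" "\<And>C. f C \<subseteq> C"
  shows "is_clause_set (f ` F)"
  using assms unfolding is_clause_set_def by (auto intro: is_clause_subset)

lemma vars_insert: "vars (insert C F) = var ` C \<union> vars F"
  unfolding vars_def by auto

lemma var_in_vars: "x \<in> C \<Longrightarrow> C \<in> F \<Longrightarrow> var x \<in> vars F"
  unfolding vars_def by blast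

lemma vars_Un: "vars (G \<union> H) = vars G \<union> vars H"
  unfolding vars_def by auto

section \<open>Assignments\<close>

fun is_pos :: "'v lit \<Rightarrow> bool" where
  "is_pos (Pos v) = True"
| "is_pos (Neg v) = False"

definition lit_true :: "('v \<Rightarrow> bool) \<Rightarrow> 'v lit \<Rightarrow> bool" where
  "lit_true \<alpha> x \<longleftrightarrow> \<alpha> (var x) = is_pos x"

definition models :: "('v \<Rightarrow> bool) \<Rightarrow> 'v lit set set \<Rightarrow> bool" where
  "models \<alpha> F \<longleftrightarrow> (\<forall>C\<in>F. \<exists>x\<in>C. lit_true \<alpha> x)"

lemma lit_true_comp [simp]: "lit_true \<alpha> (comp x) \<longleftrightarrow> \<not> lit_true \<alpha> x"
  unfolding lit_true_def by (cases x) auto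

lemma lit_true_upd_same: "lit_true (\<alpha>(var x := is_pos x)) x"
  unfolding lit_true_def by simp

lemma lit_true_upd_other: "var z \<noteq> v \<Longrightarrow> lit_true (\<alpha>(v := b)) z \<longleftrightarrow> lit_true \<alpha> z"
  unfolding lit_true_def by simp

lemma models_subset: "models \<alpha> F \<Longrightarrow> G \<subseteq> F \<Longrightarrow> models \<alpha> G"
  unfolding models_def by blast

lemma satisfiable_iff_models:
  assumes "is_clause_set F"
  shows "satisfiable F \<longleftrightarrow> (\<exists>\<alpha>. models \<alpha> F)"
proof
  assume "satisfiable F"
  then obtain \<phi> where \<phi>: "\<forall>C\<in>F. \<exists>x\<in>C. lit_val \<phi> x = Some True"
    unfolding satisfiable_def by blast
  have "lit_true (\<lambda>v. \<phi> v = Some True) x" if "lit_val \<phi> x = Some True" for x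
    using that by (cases x) (auto simp: lit_true_def)
  then show "\<exists>\<alpha>. models \<alpha> F"
    using \<phi> unfolding models_def by blast
next
  assume "\<exists>\<alpha>. models \<alpha> F"
  then obtain \<alpha> where \<alpha>: "models \<alpha> F" ..
  define \<phi> where "\<phi> v = (if v \<in> vars F then Some (\<alpha> v) else None)" for v
  have "dom \<phi> \<subseteq> vars F"
    unfolding \<phi>_def by (auto split: if_splits)
  then have "finite (dom \<phi>)"
    using is_clause_set_finite_vars[OF assms] finite_subset by blast
  moreover have "lit_val \<phi> x = Some True" if "x \<in> C" "C \<in> F" "lit_true \<alpha> x" for x C
  proof -
    have "var x \<in> vars F"
      using that unfolding vars_def by auto
    then show ?thesis
      using that(3) by (cases x) (auto simp: lit_true_def \<phi>_def)
  qed
  ultimately show "satisfiable F"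
    using \<alpha> unfolding satisfiable_def models_def by metis
qed

definition assign :: "'v lit \<Rightarrow> 'v lit set set \<Rightarrow> 'v lit set set" where
  "assign x S = (\<lambda>C. C - {comp x}) ` {C \<in> S. x \<notin> C}"

lemma is_clause_set_assign: "is_clause_set S \<Longrightarrow> is_clause_set (assign x S)"
  unfolding assign_def by (rule is_clause_set_image_shrink[OF is_clause_set_subset]) auto

lemma models_assign:
  assumes "models \<alpha> (assign x S)"
  shows "models (\<alpha>(var x := is_pos x)) S"
  unfolding models_def
proof
  fix C assume "C \<in> S"
  show "\<exists>z\<in>C. lit_true (\<alpha>(var x := is_pos x)) z"
  proof (cases "x \<in> C")
    case True
    then show ?thesis
      using lit_true_upd_same[of \<alpha> x] by blast
  next
    case False
    then have "C - {comp x} \<in> assign x S"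
      unfolding assign_def using \<open>C \<in> S\<close> by blast
    then obtain z where z: "z \<in> C" "z \<noteq> comp x" "lit_true \<alpha> z"
      using assms unfolding models_def by blast
    have "var z \<noteq> var x"
    proof
      assume "var z = var x"
      then have "z = x \<or> z = comp x"
        by (rule var_eq_cases)
      then show False
        using z(1,2) False by blast
    qed
    then show ?thesis
      using z lit_true_upd_other[of z "var x" \<alpha> "is_pos x"] by blast
  qed
qed

section \<open>Hall's condition\<close>

definition remove_vars :: "'v set \<Rightarrow> 'v lit set \<Rightarrow> 'v lit set" where
  "remove_vars V C = {z \<in> C. var z \<notin> V}"

definition hall_condition :: "'v lit set set \<Rightarrow> bool" where
  "hall_condition F \<longleftrightarrow> (\<forall>G\<subseteq>F. card G \<le> card (vars G))"

lemma vars_image_remove_vars: "vars (remove_vars V ` H) = vars H - V"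
  unfolding vars_def remove_vars_def by auto

lemma hall_conditionD: "hall_condition F \<Longrightarrow> G \<subseteq> F \<Longrightarrow> card G \<le> card (vars G)"
  unfolding hall_condition_def by blast

lemma hall_condition_subset: "hall_condition F \<Longrightarrow> G \<subseteq> F \<Longrightarrow> hall_condition G"
  unfolding hall_condition_def by blast

lemma hall_condition_image_remove_vars:
  assumes "\<And>H. H \<subseteq> F \<Longrightarrow> card H \<le> card (vars H - V)"
  shows "hall_condition (remove_vars V ` F)"
  unfolding hall_condition_def
proof (intro allI impI)
  fix H' assume "H' \<subseteq> remove_vars V ` F"
  then obtain H where H: "H \<subseteq> F" "inj_on (remove_vars V) H" "H' = remove_vars V ` H"
    by (auto simp: subset_image_inj)
  have "card H' = card H"
    using H by (simp add: card_image)
  also have "\<dots> \<le> card (vars H - V)"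
    using assms H(1) .
  also have "\<dots> = card (vars H')"
    using H(3) by (simp add: vars_image_remove_vars)
  finally show "card H' \<le> card (vars H')" .
qed

lemma models_override_on:
  assumes "\<forall>C\<in>G. \<exists>x\<in>C. var x \<in> V \<and> lit_true \<alpha> x"
    and "models \<beta> (remove_vars V ` (F - G))"
  shows "models (\<lambda>v. if v \<in> V then \<alpha> v else \<beta> v) F"
  unfolding models_def
proof
  fix C assume "C \<in> F"
  show "\<exists>x\<in>C. lit_true (\<lambda>v. if v \<in> V then \<alpha> v else \<beta> v) x"
  proof (cases "C \<in> G")
    case True
    then obtain x where "x \<in> C" "var x \<in> V" "lit_true \<alpha> x"
      using assms(1) by blast
    then show ?thesis
      by (auto simp: lit_true_def)
  next
    case False
    then have "remove_vars V C \<in> remove_vars V ` (F - G)"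
      using \<open>C \<in> F\<close> by blast
    then obtain x where "x \<in> C" "var x \<notin> V" "lit_true \<beta> x"
      using assms(2) unfolding models_def remove_vars_def by blast
    then show ?thesis
      by (auto simp: lit_true_def)
  qed
qed

lemma card_le_card_vars_Diff_if_deficiency_le:
  assumes "is_clause_set (G \<union> H)" "G \<inter> H = {}"
    and "deficiency (G \<union> H) \<le> deficiency G"
  shows "card H \<le> card (vars H - vars G)"
proof -
  have "finite (G \<union> H)" "finite (vars (G \<union> H))"
    using assms(1) is_clause_set_finite_vars unfolding is_clause_set_def by auto
  then have fin: "finite G" "finite H" "finite (vars G)" "finite (vars H)"
    by (auto simp: vars_Un)
  have "vars (G \<union> H) = vars G \<union> (vars H - vars G)"
    by (auto simp: vars_Un)
  then have "card (vars (G \<union> H)) = card (vars G) + card (vars H - vars G)"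
    using fin card_Un_disjoint[of "vars G" "vars H - vars G"] by simp
  moreover have "card (G \<union> H) = card G + card H"
    using fin assms(2) by (simp add: card_Un_disjoint)
  ultimately show ?thesis
    using assms(3) unfolding deficiency_def by linarith
qed

lemma is_clause_set_remove_vars:
  "is_clause_set F \<Longrightarrow> is_clause_set (remove_vars V ` (F - G))"
  by (rule is_clause_set_image_shrink[OF is_clause_set_subset]) (auto simp: remove_vars_def)

lemma hall_condition_remove_critical:
  assumes "is_clause_set F" "G \<subseteq> F"
    and "\<And>H. H \<subseteq> F - G \<Longrightarrow> deficiency (G \<union> H) \<le> deficiency G"
  shows "hall_condition (remove_vars (vars G) ` (F - G))"
proof (rule hall_condition_image_remove_vars)
  fix H assume H: "H \<subseteq> F - G"
  show "card H \<le> card (vars H - vars G)"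
  proof (rule card_le_card_vars_Diff_if_deficiency_le)
    show "is_clause_set (G \<union> H)"
      using H assms(2) by (intro is_clause_set_subset[OF assms(1)]) auto
    show "G \<inter> H = {}"
      using H by blast
  qed (rule assms(3)[OF H])
qed

lemma models_extend_remove_vars:
  assumes "models \<alpha> G" "models \<beta> (remove_vars (vars G) ` (F - G))"
  shows "\<exists>\<gamma>. models \<gamma> F"
proof -
  have "\<forall>C\<in>G. \<exists>x\<in>C. var x \<in> vars G \<and> lit_true \<alpha> x"
    using assms(1) unfolding models_def by (meson var_in_vars)
  from models_override_on[OF this assms(2)] show ?thesis by fast
qed

lemma hall_condition_remove_critical_subset:
  assumes "is_clause_set F" "hall_condition F" "G \<subseteq> F" "card (vars G) \<le> card G"
  shows "hall_condition (remove_vars (vars G) ` (F - G))"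
proof (rule hall_condition_remove_critical[OF assms(1,3)])
  fix H assume "H \<subseteq> F - G"
  then have "card (G \<union> H) \<le> card (vars (G \<union> H))"
    using assms(3) by (intro hall_conditionD[OF assms(2)]) blast
  then show "deficiency (G \<union> H) \<le> deficiency G"
    using assms(4) unfolding deficiency_def by linarith
qed

lemma hall_condition_remove_var_surplus:
  assumes "C \<in> F"
    and surplus: "\<And>H. H \<subseteq> F \<Longrightarrow> H \<noteq> {} \<Longrightarrow> H \<noteq> F \<Longrightarrow> card H < card (vars H)"
  shows "hall_condition (remove_vars {v} ` (F - {C}))"
proof (rule hall_condition_image_remove_vars)
  fix H assume H: "H \<subseteq> F - {C}"
  show "card H \<le> card (vars H - {v})"
  proof (cases "H = {}")
    case False
    then have "card H < card (vars H)"
      using H assms(1) by (intro surplus) auto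
    then show ?thesis
      using diff_card_le_card_Diff[of "{v}" "vars H"] by simp
  qed simp
qed

text \<open>Either some nonempty proper subset \<open>G\<close> is critical, and then \<open>G\<close> is satisfied on its own
  variables while the other clauses do not need them; or every such subset has surplus, and then
  one literal may be set true arbitrarily.\<close>
lemma hall_condition_imp_models:
  "is_clause_set F \<Longrightarrow> hall_condition F \<Longrightarrow> \<exists>\<alpha>. models \<alpha> F"
proof (induction "card F" arbitrary: F rule: less_induct)
  case less
  have fin: "finite F"
    using less.prems(1) unfolding is_clause_set_def by blast
  have IH: "\<exists>\<beta>. models \<beta> (remove_vars V ` (F - G))"
    if "G \<subseteq> F" "G \<noteq> {}" "hall_condition (remove_vars V ` (F - G))" for G V
  proof (rule less.hyps)
    have "card (remove_vars V ` (F - G)) \<le> card (F - G)"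
      using fin by (intro card_image_le) auto
    also have "\<dots> < card F"
      using that(1,2) fin by (intro psubset_card_mono) auto
    finally show "card (remove_vars V ` (F - G)) < card F" .
  qed (use is_clause_set_remove_vars[OF less.prems(1)] that(3) in auto)
  show ?case
  proof (cases "\<exists>G\<subseteq>F. G \<noteq> {} \<and> G \<noteq> F \<and> card (vars G) \<le> card G")
    case True
    then obtain G where G: "G \<subseteq> F" "G \<noteq> {}" "G \<noteq> F" "card (vars G) \<le> card G"
      by blast
    have "card G < card F"
      using G(1,3) fin by (intro psubset_card_mono) auto
    then obtain \<alpha> where "models \<alpha> G"
      using less.hyps is_clause_set_subset[OF less.prems(1) G(1)]
        hall_condition_subset[OF less.prems(2) G(1)] by blast
    moreover obtain \<beta> where "models \<beta> (remove_vars (vars G) ` (F - G))"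
      using IH[OF G(1,2) hall_condition_remove_critical_subset[OF less.prems G(1,4)]] by blast
    ultimately show ?thesis
      by (rule models_extend_remove_vars)
  next
    case False
    then have surplus: "card H < card (vars H)" if "H \<subseteq> F" "H \<noteq> {}" "H \<noteq> F" for H
      using that by (meson not_le)
    show ?thesis
    proof (cases "F = {}")
      case True
      then show ?thesis by (simp add: models_def)
    next
      case False
      then obtain C where C: "C \<in> F" by blast
      then have "card {C} \<le> card (vars {C})"
        using hall_conditionD[OF less.prems(2)] by blast
      then obtain y where y: "y \<in> C"
        by (cases "C = {}") (auto simp: vars_def)
      obtain \<beta> where \<beta>: "models \<beta> (remove_vars {var y} ` (F - {C}))"
        using IH[OF _ _ hall_condition_remove_var_surplus[OF C surplus]] C by blast
      have "\<forall>D\<in>{C}. \<exists>x\<in>D. var x \<in> {var y} \<and> lit_true (\<lambda>_. is_pos y) x"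
        using y by (auto simp: lit_true_def)
      from models_override_on[OF this \<beta>] show ?thesis by fast
    qed
  qed
qed

section \<open>Minimally unsatisfiable clause-sets\<close>

lemma min_unsat_is_clause_set: "min_unsat F \<Longrightarrow> is_clause_set F"
  unfolding min_unsat_def by blast

lemma min_unsat_not_models: "min_unsat F \<Longrightarrow> \<not> models \<alpha> F"
  using satisfiable_iff_models min_unsat_is_clause_set unfolding min_unsat_def by blast

lemma min_unsat_models_remove:
  assumes "min_unsat F" "C \<in> F"
  shows "\<exists>\<alpha>. models \<alpha> (F - {C}) \<and> (\<forall>x\<in>C. \<not> lit_true \<alpha> x)"
proof -
  have "is_clause_set (F - {C})"
    using is_clause_set_subset[OF min_unsat_is_clause_set[OF assms(1)]] by blast
  moreover have "satisfiable (F - {C})"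
    using assms unfolding min_unsat_def by blast
  ultimately obtain \<alpha> where \<alpha>: "models \<alpha> (F - {C})"
    using satisfiable_iff_models by blast
  moreover have "\<not> lit_true \<alpha> x" if "x \<in> C" for x
  proof
    assume "lit_true \<alpha> x"
    then have "models \<alpha> F"
      using \<alpha> that unfolding models_def by blast
    then show False
      using min_unsat_not_models[OF assms(1)] by blast
  qed
  ultimately show ?thesis by blast
qed

lemma min_unsatI:
  assumes "is_clause_set F" "\<And>\<alpha>. \<not> models \<alpha> F" "\<And>C. C \<in> F \<Longrightarrow> \<exists>\<alpha>. models \<alpha> (F - {C})"
  shows "min_unsat F"
  unfolding min_unsat_def
proof (intro conjI ballI)
  show "\<not> satisfiable F"
    using assms(2) satisfiable_iff_models[OF assms(1)] by blast
  fix C assume "C \<in> F"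
  then show "satisfiable (F - {C})"
    using assms(3) satisfiable_iff_models[OF is_clause_set_subset[OF assms(1), of "F - {C}"]] by blast
qed (rule assms(1))

lemma min_unsat_subset_clause_eq:
  assumes "min_unsat F" "C \<in> F" "D \<in> F" "C \<subseteq> D"
  shows "C = D"
proof (rule ccontr)
  assume "C \<noteq> D"
  obtain \<alpha> where \<alpha>: "models \<alpha> (F - {D})"
    using min_unsat_models_remove[OF assms(1,3)] by blast
  then obtain x where "x \<in> C" "lit_true \<alpha> x"
    using assms(2) \<open>C \<noteq> D\<close> unfolding models_def by blast
  then have "models \<alpha> F"
    using \<alpha> assms(4) unfolding models_def by blast
  then show False
    using min_unsat_not_models[OF assms(1)] by blast
qed

lemma min_unsat_empty_clause:
  assumes "min_unsat F" "{} \<in> F"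
  shows "F = {{}}"
proof -
  have "C = {}" if "C \<in> F" for C
    using min_unsat_subset_clause_eq[OF assms(1,2) that] by simp
  then show ?thesis
    using assms(2) by blast
qed

lemma min_unsat_comp_occurs:
  assumes mu: "min_unsat F" and "C \<in> F" "x \<in> C"
  shows "\<exists>D\<in>F. comp x \<in> D"
proof (rule ccontr)
  assume "\<not> (\<exists>D\<in>F. comp x \<in> D)"
  then have "assign x F \<subseteq> F - {C}"
    unfolding assign_def using \<open>x \<in> C\<close> by auto
  moreover obtain \<alpha> where "models \<alpha> (F - {C})"
    using min_unsat_models_remove[OF mu \<open>C \<in> F\<close>] by blast
  ultimately have "models \<alpha> (assign x F)"
    using models_subset by blast
  from models_assign[OF this] show False
    by (rule notE[OF min_unsat_not_models[OF mu]])
qed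

lemma min_unsat_ld_pos:
  assumes "min_unsat F" "var x \<in> vars F"
  shows "1 \<le> ld F x"
proof -
  obtain C z where "C \<in> F" "z \<in> C" "var z = var x"
    using assms(2) unfolding vars_def by auto
  then have "\<exists>D\<in>F. x \<in> D"
    using var_eq_cases[of z x] min_unsat_comp_occurs[OF assms(1), of C z] by auto
  moreover have "finite F"
    using min_unsat_is_clause_set[OF assms(1)] unfolding is_clause_set_def by blast
  ultimately have "0 < card {C \<in> F. x \<in> C}"
    by (auto simp: card_gt_0_iff)
  then show ?thesis
    unfolding ld_def by simp
qed

text \<open>Core of Tarsi's lemma: a proper subset \<open>G\<close> of maximal deficiency is satisfiable by
  minimality, and maximality gives Hall's condition for the remaining clauses with the variables
  of \<open>G\<close> deleted, so \<open>F\<close> would be satisfiable.\<close>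
lemma min_unsat_max_deficiency_subset_eq:
  assumes mu: "min_unsat F" and G: "G \<subseteq> F"
    and max: "\<And>H. H \<subseteq> F \<Longrightarrow> deficiency H \<le> deficiency G"
  shows "G = F"
proof (rule ccontr)
  assume "G \<noteq> F"
  then obtain C where C: "C \<in> F" "C \<notin> G"
    using G by blast
  have cs: "is_clause_set F"
    using min_unsat_is_clause_set[OF mu] .
  obtain \<alpha> where "models \<alpha> (F - {C})"
    using min_unsat_models_remove[OF mu C(1)] by blast
  then have "models \<alpha> G"
    using G C(2) models_subset by blast
  moreover have "hall_condition (remove_vars (vars G) ` (F - G))"
  proof (rule hall_condition_remove_critical[OF cs G])
    fix H assume "H \<subseteq> F - G"
    then show "deficiency (G \<union> H) \<le> deficiency G"
      using G by (intro max) blast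
  qed
  then obtain \<beta> where "models \<beta> (remove_vars (vars G) ` (F - G))"
    using hall_condition_imp_models[OF is_clause_set_remove_vars[OF cs]] by blast
  ultimately obtain \<gamma> where "models \<gamma> F"
    using models_extend_remove_vars by blast
  then show False
    using min_unsat_not_models[OF mu] by blast
qed

theorem min_unsat_deficiency_less:
  assumes mu: "min_unsat F" and "G \<subset> F"
  shows "deficiency G < deficiency F"
proof -
  let ?M = "Max (deficiency ` Pow F)"
  have fin: "finite (deficiency ` Pow F)"
    using min_unsat_is_clause_set[OF mu] unfolding is_clause_set_def by simp
  have max: "deficiency H \<le> ?M" if "H \<subseteq> F" for H
    using fin that by simp
  have max_eq: "H = F" if "H \<subseteq> F" "deficiency H = ?M" for H
    using mu that(1) by (rule min_unsat_max_deficiency_subset_eq) (simp add: max that(2))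
  have "?M \<in> deficiency ` Pow F"
    using fin by (intro Max_in) auto
  then obtain G0 where "G0 \<subseteq> F" "deficiency G0 = ?M"
    by auto
  then have "deficiency F = ?M"
    using max_eq by blast
  moreover have "G \<subseteq> F" "G \<noteq> F"
    using \<open>G \<subset> F\<close> by auto
  ultimately show ?thesis
    using max max_eq by (metis order_le_less)
qed

corollary min_unsat_deficiency_pos: "min_unsat F \<Longrightarrow> 1 \<le> deficiency F"
proof -
  assume mu: "min_unsat F"
  then have "F \<noteq> {}"
    using min_unsat_not_models unfolding models_def by blast
  then have "{} \<subset> F"
    by auto
  from min_unsat_deficiency_less[OF mu this] show ?thesis
    by (simp add: deficiency_def vars_def)
qed

section \<open>Saturated extensions\<close>

definition extends_clausewise :: "'v lit set set \<Rightarrow> 'v lit set set \<Rightarrow> bool" where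
  "extends_clausewise F S \<longleftrightarrow> (\<exists>f. bij_betw f F S \<and> (\<forall>C\<in>F. C \<subseteq> f C))"

text \<open>Saturation: adding to a clause a new literal on a variable of \<open>S\<close> makes the clause-set
  satisfiable, i.e. some assignment satisfies the other clauses, falsifies the clause and makes
  the literal true.\<close>
definition saturated :: "'v lit set set \<Rightarrow> bool" where
  "saturated S \<longleftrightarrow> min_unsat S \<and>
    (\<forall>C\<in>S. \<forall>y. var y \<in> vars S \<and> var y \<notin> var ` C \<longrightarrow>
      (\<exists>\<alpha>. models \<alpha> (S - {C}) \<and> (\<forall>x\<in>C. \<not> lit_true \<alpha> x) \<and> lit_true \<alpha> y))"

lemma extends_clausewise_refl: "extends_clausewise F F"
  unfolding extends_clausewise_def by (intro exI[of _ id]) auto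

lemma extends_clausewise_trans:
  assumes "extends_clausewise F G" "extends_clausewise G H"
  shows "extends_clausewise F H"
proof -
  obtain f g where f: "bij_betw f F G" "\<forall>C\<in>F. C \<subseteq> f C"
    and g: "bij_betw g G H" "\<forall>C\<in>G. C \<subseteq> g C"
    using assms unfolding extends_clausewise_def by blast
  have "bij_betw (g \<circ> f) F H"
    using f(1) g(1) by (rule bij_betw_trans)
  moreover have "C \<subseteq> (g \<circ> f) C" if "C \<in> F" for C
    using f(2) g(2) bij_betwE[OF f(1)] that by fastforce
  ultimately show ?thesis
    unfolding extends_clausewise_def by blast
qed

lemma extends_clausewise_replace:
  assumes "C \<in> S" "C \<subseteq> C'" "C' \<notin> S - {C}"
  shows "extends_clausewise S (insert C' (S - {C}))"
proof -
  define g where "g D = (if D = C then C' else D)" for D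
  have "bij_betw g S (insert C' (S - {C}))"
    unfolding bij_betw_def inj_on_def g_def using assms(1,3) by auto
  moreover have "\<forall>D\<in>S. D \<subseteq> g D"
    using assms(2) unfolding g_def by auto
  ultimately show ?thesis
    unfolding extends_clausewise_def by blast
qed

lemma extends_clausewise_card: "extends_clausewise F S \<Longrightarrow> card S = card F"
  unfolding extends_clausewise_def by (metis bij_betw_same_card)

lemma extends_clausewise_ld:
  assumes "extends_clausewise F S" "finite S"
  shows "ld F x \<le> ld S x"
proof -
  obtain f where f: "bij_betw f F S" "\<forall>C\<in>F. C \<subseteq> f C"
    using assms(1) unfolding extends_clausewise_def by blast
  have "inj_on f {C \<in> F. x \<in> C}"
    using f(1) unfolding bij_betw_def by (auto intro: inj_on_subset)
  moreover have "f ` {C \<in> F. x \<in> C} \<subseteq> {D \<in> S. x \<in> D}"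
    using f unfolding bij_betw_def by auto
  ultimately show ?thesis
    unfolding ld_def using assms(2) by (intro card_inj_on_le) auto
qed

lemma extends_clausewise_vdeg:
  "extends_clausewise F S \<Longrightarrow> finite S \<Longrightarrow> vdeg F v \<le> vdeg S v"
  unfolding vdeg_def using extends_clausewise_ld add_mono by metis

lemma is_clause_insert: "is_clause C \<Longrightarrow> var y \<notin> var ` C \<Longrightarrow> is_clause (insert y C)"
  unfolding is_clause_def by (auto simp: image_iff)

lemma min_unsat_enlarge_clause:
  assumes mu: "min_unsat S" and C: "C \<in> S" and y: "var y \<notin> var ` C"
    and unsat: "\<nexists>\<alpha>. models \<alpha> (S - {C}) \<and> (\<forall>x\<in>C. \<not> lit_true \<alpha> x) \<and> lit_true \<alpha> y"
  shows "min_unsat (insert (insert y C) (S - {C}))"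
proof (rule min_unsatI)
  have "is_clause C"
    using min_unsat_is_clause_set[OF mu] C unfolding is_clause_set_def by blast
  then show "is_clause_set (insert (insert y C) (S - {C}))"
    using min_unsat_is_clause_set[OF mu] is_clause_insert[OF _ y]
    unfolding is_clause_set_def by simp
next
  fix \<alpha> show "\<not> models \<alpha> (insert (insert y C) (S - {C}))"
  proof
    assume \<alpha>: "models \<alpha> (insert (insert y C) (S - {C}))"
    then have rest: "models \<alpha> (S - {C})"
      by (rule models_subset) blast
    show False
    proof (cases "\<exists>x\<in>C. lit_true \<alpha> x")
      case True
      then have "models \<alpha> S"
        using rest C unfolding models_def by blast
      then show False
        using min_unsat_not_models[OF mu] by blast
    next
      case False
      moreover have "\<exists>x\<in>insert y C. lit_true \<alpha> x"
        using \<alpha> unfolding models_def by blast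
      ultimately have "lit_true \<alpha> y"
        by blast
      then show False
        using unsat rest False by blast
    qed
  qed
next
  fix D assume D: "D \<in> insert (insert y C) (S - {C})"
  show "\<exists>\<alpha>. models \<alpha> (insert (insert y C) (S - {C}) - {D})"
  proof (cases "D \<in> S - {C}")
    case True
    then obtain \<alpha> where \<alpha>: "models \<alpha> (S - {D})"
      using min_unsat_models_remove[OF mu] by blast
    have "C \<in> S - {D}"
      using C True by blast
    then obtain x where "x \<in> C" "lit_true \<alpha> x"
      using \<alpha> unfolding models_def by blast
    then have "models \<alpha> (insert (insert y C) (S - {D}))"
      using \<alpha> unfolding models_def by blast
    then have "models \<alpha> (insert (insert y C) (S - {C}) - {D})"
      by (rule models_subset) blast
    then show ?thesis by blast
  next
    case False
    obtain \<alpha> where "models \<alpha> (S - {C})"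
      using min_unsat_models_remove[OF mu C] by blast
    then have "models \<alpha> (insert (insert y C) (S - {C}) - {D})"
      by (rule models_subset) (use False D in blast)
    then show ?thesis by blast
  qed
qed

definition literal_count :: "'v lit set set \<Rightarrow> nat" where
  "literal_count S = (\<Sum>C\<in>S. card C)"

lemma literal_count_le:
  assumes "finite V" "vars S \<subseteq> V"
  shows "literal_count S \<le> card S * (2 * card V)"
proof -
  have "card C \<le> 2 * card V" if C: "C \<in> S" for C
  proof -
    have "C \<subseteq> Pos ` V \<union> Neg ` V"
    proof
      fix x assume "x \<in> C"
      then have "var x \<in> V"
        using var_in_vars[OF _ C] assms(2) by blast
      then show "x \<in> Pos ` V \<union> Neg ` V"
        by (cases x) auto
    qed
    then have "card C \<le> card (Pos ` V \<union> Neg ` V)"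
      using assms(1) by (intro card_mono) auto
    also have "\<dots> \<le> card (Pos ` V) + card (Neg ` V)"
      by (rule card_Un_le)
    also have "\<dots> \<le> 2 * card V"
      using card_image_le[OF assms(1), of Pos] card_image_le[OF assms(1), of Neg] by simp
    finally show ?thesis .
  qed
  then show ?thesis
    unfolding literal_count_def using sum_bounded_above[of S card "2 * card V"] by simp
qed

lemma enlarge_clause:
  assumes mu: "min_unsat S" and C: "C \<in> S" and y: "var y \<in> vars S" "var y \<notin> var ` C"
  shows "vars (insert (insert y C) (S - {C})) = vars S"
    and "extends_clausewise S (insert (insert y C) (S - {C}))"
    and "literal_count (insert (insert y C) (S - {C})) = literal_count S + 1"
proof -
  have "y \<notin> C"
    using y(2) by blast
  have new: "insert y C \<notin> S - {C}"
  proof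
    assume "insert y C \<in> S - {C}"
    then have "C = insert y C"
      using min_unsat_subset_clause_eq[OF mu C, of "insert y C"] by blast
    then show False
      using \<open>y \<notin> C\<close> by blast
  qed
  have "vars S = var ` C \<union> vars (S - {C})"
    using C vars_insert[of C "S - {C}"] by (simp add: insert_absorb)
  then show "vars (insert (insert y C) (S - {C})) = vars S"
    using y(1) by (auto simp: vars_insert)
  show "extends_clausewise S (insert (insert y C) (S - {C}))"
    using C new by (intro extends_clausewise_replace) auto
  have fin: "finite S" "finite C"
    using min_unsat_is_clause_set[OF mu] C unfolding is_clause_set_def is_clause_def by auto
  have "literal_count (insert (insert y C) (S - {C})) = card (insert y C) + literal_count (S - {C})"
    unfolding literal_count_def using fin new by simp
  also have "\<dots> = literal_count S + 1"
    unfolding literal_count_def using fin \<open>y \<notin> C\<close> C by (simp add: sum.remove)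
  finally show "literal_count (insert (insert y C) (S - {C})) = literal_count S + 1" .
qed

text \<open>A minimally unsatisfiable clause-wise extension with the same variables and the largest
  number of literal occurrences is saturated.\<close>
lemma exists_saturated_extension:
  assumes mu: "min_unsat F"
  shows "\<exists>S. saturated S \<and> vars S = vars F \<and> extends_clausewise F S"
proof -
  define P where "P S \<longleftrightarrow> min_unsat S \<and> vars S = vars F \<and> extends_clausewise F S" for S
  have fin: "finite (vars F)"
    using is_clause_set_finite_vars[OF min_unsat_is_clause_set[OF mu]] .
  have "literal_count S < card F * (2 * card (vars F)) + 1" if "P S" for S
    using literal_count_le[OF fin, of S] extends_clausewise_card[of F S] that
    unfolding P_def by simp
  moreover have "P F"
    using mu extends_clausewise_refl unfolding P_def by blast
  ultimately obtain S where S: "P S" and max: "\<And>S'. P S' \<Longrightarrow> literal_count S' \<le> literal_count S"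
    using Lattices_Big.ex_has_greatest_nat[of P F literal_count] by blast
  have mu_S: "min_unsat S"
    using S unfolding P_def by blast
  have "\<exists>\<alpha>. models \<alpha> (S - {C}) \<and> (\<forall>x\<in>C. \<not> lit_true \<alpha> x) \<and> lit_true \<alpha> y"
    if C: "C \<in> S" and y: "var y \<in> vars S" "var y \<notin> var ` C" for C y
  proof (rule ccontr)
    assume "\<nexists>\<alpha>. models \<alpha> (S - {C}) \<and> (\<forall>x\<in>C. \<not> lit_true \<alpha> x) \<and> lit_true \<alpha> y"
    then have "min_unsat (insert (insert y C) (S - {C}))"
      using min_unsat_enlarge_clause[OF mu_S C y(2)] by blast
    then have "P (insert (insert y C) (S - {C}))"
      using S enlarge_clause(1,2)[OF mu_S C y] extends_clausewise_trans unfolding P_def by blast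
    then show False
      using max enlarge_clause(3)[OF mu_S C y] by fastforce
  qed
  then have "saturated S"
    unfolding saturated_def using mu_S by blast
  then show ?thesis
    using S unfolding P_def by blast
qed

section \<open>Splitting on a literal\<close>

lemma min_unsat_inj_on_remove_comp:
  assumes "min_unsat S"
  shows "inj_on (\<lambda>C. C - {comp x}) {C \<in> S. x \<notin> C}"
proof (rule inj_onI)
  fix C D assume C: "C \<in> {C \<in> S. x \<notin> C}" and D: "D \<in> {C \<in> S. x \<notin> C}"
    and eq: "C - {comp x} = D - {comp x}"
  have "C \<subseteq> D \<or> D \<subseteq> C"
    using eq by (cases "comp x \<in> C") blast+
  then show "C = D"
    using min_unsat_subset_clause_eq[OF assms] C D by blast
qed

lemma card_assign:
  assumes "min_unsat S"
  shows "card (assign x S) = card S - ld S x"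
proof -
  have "finite S"
    using min_unsat_is_clause_set[OF assms] unfolding is_clause_set_def by blast
  have "{C \<in> S. x \<notin> C} = S - {C \<in> S. x \<in> C}"
    by blast
  then have "card {C \<in> S. x \<notin> C} = card S - ld S x"
    unfolding ld_def using \<open>finite S\<close> by (simp add: card_Diff_subset)
  then show ?thesis
    unfolding assign_def using card_image[OF min_unsat_inj_on_remove_comp[OF assms]] by simp
qed

lemma vars_assign_subset: "vars (assign x S) \<subseteq> vars S - {var x}"
proof
  fix w assume "w \<in> vars (assign x S)"
  then obtain C z where C: "C \<in> S" "x \<notin> C" "z \<in> C" "z \<noteq> comp x" "var z = w"
    unfolding vars_def assign_def by blast
  then have "z \<noteq> x"
    by blast
  then have "w \<noteq> var x"
    using var_eq_cases[of z x] C(4,5) by blast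
  moreover have "w \<in> vars S"
    using var_in_vars[OF C(3,1)] C(5) by simp
  ultimately show "w \<in> vars S - {var x}"
    by blast
qed

lemma saturated_models_remove_lit_true:
  assumes sat: "saturated S" and x: "var x \<in> vars S" and D: "D \<in> S" "x \<notin> D"
  shows "\<exists>\<alpha>. models \<alpha> (S - {D}) \<and> lit_true \<alpha> x"
proof (cases "comp x \<in> D")
  case True
  have "min_unsat S"
    using sat unfolding saturated_def by blast
  then obtain \<alpha> where \<alpha>: "models \<alpha> (S - {D})" "\<forall>z\<in>D. \<not> lit_true \<alpha> z"
    using min_unsat_models_remove D(1) by blast
  then have "\<not> lit_true \<alpha> (comp x)"
    using True by blast
  then show ?thesis
    using \<alpha> by auto
next
  case False
  have "var x \<notin> var ` D"
  proof
    assume "var x \<in> var ` D"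
    then obtain z where "z \<in> D" "var z = var x"
      by auto
    then show False
      using var_eq_cases[of z x] D(2) False by blast
  qed
  then show ?thesis
    using sat D(1) x unfolding saturated_def by blast
qed

lemma saturated_min_unsat_assign:
  assumes sat: "saturated S" and x: "var x \<in> vars S"
  shows "min_unsat (assign x S)"
proof (rule min_unsatI)
  have mu: "min_unsat S"
    using sat unfolding saturated_def by blast
  then show "is_clause_set (assign x S)"
    using is_clause_set_assign min_unsat_is_clause_set by blast
  show "\<not> models \<alpha> (assign x S)" for \<alpha>
  proof
    assume "models \<alpha> (assign x S)"
    from models_assign[OF this] show False
      by (rule notE[OF min_unsat_not_models[OF mu]])
  qed
  fix D' assume "D' \<in> assign x S"
  then obtain D where D: "D \<in> S" "x \<notin> D" "D' = D - {comp x}"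
    unfolding assign_def by blast
  then obtain \<alpha> where \<alpha>: "models \<alpha> (S - {D})" "lit_true \<alpha> x"
    using saturated_models_remove_lit_true[OF sat x] by blast
  have "models \<alpha> (assign x S - {D'})"
    unfolding models_def
  proof
    fix E' assume "E' \<in> assign x S - {D'}"
    then obtain E where E: "E \<in> S" "E' = E - {comp x}" "E \<noteq> D"
      unfolding assign_def using D(3) by blast
    then obtain z where z: "z \<in> E" "lit_true \<alpha> z"
      using \<alpha>(1) unfolding models_def by blast
    moreover have "z \<noteq> comp x"
      using z(2) \<alpha>(2) by auto
    ultimately show "\<exists>z\<in>E'. lit_true \<alpha> z"
      using E(2) by blast
  qed
  then show "\<exists>\<alpha>. models \<alpha> (assign x S - {D'})"
    by blast
qed

lemma ld_le_card: "finite S \<Longrightarrow> ld S x \<le> card S"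
  unfolding ld_def by (intro card_mono) auto

lemma vdeg_var: "vdeg S (var x) = ld S x + ld S (comp x)"
  unfolding vdeg_def by (cases x) auto

lemma vdeg_eq_card_occurrences:
  assumes "is_clause_set S"
  shows "vdeg S w = card {C \<in> S. w \<in> var ` C}"
proof -
  have "finite S"
    using assms unfolding is_clause_set_def by blast
  have "{C \<in> S. w \<in> var ` C} = {C \<in> S. Pos w \<in> C} \<union> {C \<in> S. Neg w \<in> C}"
    by (auto simp: var_in_image_iff)
  moreover have "Neg w \<notin> C" if "C \<in> S" "Pos w \<in> C" for C
    using is_clause_comp_notin[of C "Pos w"] assms that unfolding is_clause_set_def by simp
  then have "{C \<in> S. Pos w \<in> C} \<inter> {C \<in> S. Neg w \<in> C} = {}"
    by blast
  ultimately show ?thesis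
    unfolding vdeg_def ld_def using \<open>finite S\<close> by (simp add: card_Un_disjoint)
qed

lemma vdeg_eq_0:
  assumes "w \<notin> vars S"
  shows "vdeg S w = 0"
proof -
  have none: "{C \<in> S. Pos w \<in> C} = {}" "{C \<in> S. Neg w \<in> C} = {}"
    using var_in_vars[of "Pos w" _ S] var_in_vars[of "Neg w" _ S] assms by auto
  show ?thesis
    unfolding vdeg_def ld_def none by simp
qed

text \<open>Every occurrence of \<open>w\<close> either lies in a clause containing \<open>x\<close> or survives the assignment.\<close>
lemma vdeg_le_vdeg_assign:
  assumes mu: "min_unsat S" and w: "w \<noteq> var x"
  shows "vdeg S w \<le> vdeg (assign x S) w + ld S x"
proof -
  let ?occ = "\<lambda>T. {C \<in> T. w \<in> var ` C}" and ?K = "{C \<in> S. x \<notin> C}"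
  have cs: "is_clause_set S"
    using min_unsat_is_clause_set[OF mu] .
  then have fin: "finite S"
    unfolding is_clause_set_def by blast
  have "card (?occ S) \<le> card ({C \<in> S. x \<in> C} \<union> (?occ S \<inter> ?K))"
    using fin by (intro card_mono) auto
  also have "\<dots> \<le> ld S x + card (?occ S \<inter> ?K)"
    unfolding ld_def by (rule card_Un_le)
  also have "card (?occ S \<inter> ?K) \<le> card (?occ (assign x S))"
  proof (rule card_inj_on_le)
    show "inj_on (\<lambda>C. C - {comp x}) (?occ S \<inter> ?K)"
      using min_unsat_inj_on_remove_comp[OF mu] by (rule inj_on_subset) blast
    show "(\<lambda>C. C - {comp x}) ` (?occ S \<inter> ?K) \<subseteq> ?occ (assign x S)"
    proof
      fix D assume "D \<in> (\<lambda>C. C - {comp x}) ` (?occ S \<inter> ?K)"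
      then obtain C z where C: "C \<in> S" "x \<notin> C" "D = C - {comp x}" "z \<in> C" "var z = w"
        by blast
      then have "z \<in> D"
        using w by auto
      moreover have "D \<in> assign x S"
        unfolding assign_def using C(1-3) by blast
      ultimately show "D \<in> ?occ (assign x S)"
        using C(5) by blast
    qed
    show "finite (?occ (assign x S))"
      using is_clause_set_assign[OF cs] unfolding is_clause_set_def by simp
  qed
  finally show ?thesis
    using vdeg_eq_card_occurrences[OF cs] vdeg_eq_card_occurrences[OF is_clause_set_assign[OF cs]]
    by simp
qed

text \<open>A vanishing variable occurs only in clauses containing \<open>x\<close>, so its degree would be below
  that of \<open>var x\<close>, since \<open>comp x\<close> occurs too.\<close>
lemma vars_assign_min_vdeg:
  assumes mu: "min_unsat S" and x: "var x \<in> vars S"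
    and min: "\<And>w. w \<in> vars S \<Longrightarrow> vdeg S (var x) \<le> vdeg S w"
  shows "vars (assign x S) = vars S - {var x}"
proof
  show "vars (assign x S) \<subseteq> vars S - {var x}"
    by (rule vars_assign_subset)
  show "vars S - {var x} \<subseteq> vars (assign x S)"
  proof
    fix w assume w: "w \<in> vars S - {var x}"
    show "w \<in> vars (assign x S)"
    proof (rule ccontr)
      assume "w \<notin> vars (assign x S)"
      then have "vdeg S w \<le> ld S x"
        using vdeg_le_vdeg_assign[OF mu, of w x] w vdeg_eq_0[of w "assign x S"] by simp
      moreover have "1 \<le> ld S (comp x)"
        using min_unsat_ld_pos[OF mu] x by simp
      ultimately show False
        using min[of w] w vdeg_var[of S x] by simp
    qed
  qed
qed

lemma deficiency_assign:
  assumes mu: "min_unsat S" and x: "var x \<in> vars S"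
    and vars: "vars (assign x S) = vars S - {var x}"
  shows "deficiency (assign x S) = deficiency S - int (ld S x) + 1"
proof -
  have fin: "finite S" "finite (vars S)"
    using min_unsat_is_clause_set[OF mu] is_clause_set_finite_vars unfolding is_clause_set_def by auto
  have "ld S x \<le> card S"
    using fin(1) by (rule ld_le_card)
  then have "int (card (assign x S)) = int (card S) - int (ld S x)"
    using card_assign[OF mu] by simp
  moreover have "0 < card (vars S)"
    using x fin(2) by (auto simp: card_gt_0_iff)
  then have "int (card (vars (assign x S))) = int (card (vars S)) - 1"
    using vars x fin(2) by (simp add: of_nat_diff)
  ultimately show ?thesis
    unfolding deficiency_def by simp
qed

lemma clause_set_vars_singleton:
  assumes "is_clause_set S" "{} \<notin> S" "vars S \<subseteq> {v}"
  shows "S \<subseteq> {{Pos v}, {Neg v}}"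
proof
  fix C assume C: "C \<in> S"
  have "z = Pos v \<or> z = Neg v" if "z \<in> C" for z
    using var_in_vars[OF that C] assms(3) var_eq_PosNeg[of z v] by blast
  moreover have "\<not> (Pos v \<in> C \<and> Neg v \<in> C)"
    using is_clause_comp_notin[of C "Pos v"] assms(1) C unfolding is_clause_set_def by auto
  moreover have "C \<noteq> {}"
    using assms(2) C by blast
  ultimately show "C \<in> {{Pos v}, {Neg v}}"
    by auto
qed

lemma assign_ne_empty_clause_set:
  assumes mu: "min_unsat S" and i: "2 \<le> ld S x"
    and vars: "vars (assign x S) = vars S - {var x}"
  shows "assign x S \<noteq> {{}}"
proof
  assume A: "assign x S = {{}}"
  have fin: "finite S"
    using min_unsat_is_clause_set[OF mu] unfolding is_clause_set_def by blast
  have "{} \<notin> S"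
  proof
    assume "{} \<in> S"
    then have "ld S x = 0"
      using min_unsat_empty_clause[OF mu] unfolding ld_def by simp
    then show False
      using i by simp
  qed
  moreover have "vars S \<subseteq> {var x}"
    using vars A by (auto simp: vars_def)
  ultimately have "S \<subseteq> {{Pos (var x)}, {Neg (var x)}}"
    by (rule clause_set_vars_singleton[OF min_unsat_is_clause_set[OF mu]])
  then have "card S \<le> card {{Pos (var x)}, {Neg (var x)}}"
    by (intro card_mono) simp_all
  also have "\<dots> = 2"
    by simp
  finally have "card S \<le> 2" .
  moreover have "ld S x \<le> card S"
    using fin by (rule ld_le_card)
  moreover have "card S - ld S x = 1"
    using card_assign[OF mu, of x] A by simp
  ultimately show False
    using i by linarith
qed

section \<open>The bound\<close>

lemma NM_ge_term: "2 \<le> i \<Longrightarrow> i \<le> k \<Longrightarrow> min (2 * i) (NM (k - i + 1) + i) \<le> NM k"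
  by (subst NM.simps) (auto intro!: Max_ge)

lemma NM_ge_2: "2 \<le> NM k"
proof (cases "k \<le> 1")
  case True
  then show ?thesis by (subst NM.simps) simp
next
  case False
  then have "min (2 * 2) (NM (k - 2 + 1) + 2) \<le> NM k"
    by (intro NM_ge_term) auto
  then show ?thesis by linarith
qed

lemma NM_le_Suc: "NM k \<le> NM (Suc k)"
proof (induction k rule: less_induct)
  case (less k)
  show ?case
  proof (cases "k \<le> 1")
    case True
    then show ?thesis
      using NM_ge_2[of "Suc k"] by (subst NM.simps) simp
  next
    case False
    have "min (2 * i) (NM (k - i + 1) + i) \<le> NM (Suc k)" if "i \<in> {2..k}" for i
    proof -
      have "k - i + 1 < k"
        using that by auto
      then have "NM (k - i + 1) \<le> NM (Suc (k - i + 1))"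
        by (rule less)
      also have "Suc (k - i + 1) = Suc k - i + 1"
        using that by auto
      finally have "NM (k - i + 1) \<le> NM (Suc k - i + 1)" .
      then have "min (2 * i) (NM (k - i + 1) + i) \<le> min (2 * i) (NM (Suc k - i + 1) + i)"
        by simp
      also have "\<dots> \<le> NM (Suc k)"
        using that by (intro NM_ge_term) auto
      finally show ?thesis .
    qed
    then show ?thesis
      using False by (subst NM.simps) simp
  qed
qed

lemma NM_mono: "k \<le> k' \<Longrightarrow> NM k \<le> NM k'"
  by (rule lift_Suc_mono_le[of NM, OF NM_le_Suc])

lemma exists_lit_max_ld: "\<exists>x. var x = v \<and> ld S (Pos v) \<le> ld S x \<and> ld S (Neg v) \<le> ld S x"
proof (cases "ld S (Neg v) \<le> ld S (Pos v)")
  case True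
  then show ?thesis by (intro exI[of _ "Pos v"]) simp
next
  case False
  then show ?thesis by (intro exI[of _ "Neg v"]) simp
qed

lemma min_unsat_vars_nonempty:
  assumes "min_unsat F" "F \<noteq> {{}}"
  shows "vars F \<noteq> {}"
proof -
  obtain C where C: "C \<in> F"
    using min_unsat_not_models[OF assms(1)] unfolding models_def by blast
  then have "C \<noteq> {}"
    using min_unsat_empty_clause[OF assms(1)] assms(2) by blast
  then obtain z where "z \<in> C"
    by blast
  then show ?thesis
    using var_in_vars[OF _ C] by blast
qed

text \<open>The induction step of the next lemma, whose induction hypothesis is passed as \<open>IH\<close>.\<close>
lemma saturated_min_vdeg_le_NM:
  fixes S :: "'v lit set set"
  assumes sat: "saturated S" and x: "var x \<in> vars S"
    and min: "\<And>w. w \<in> vars S \<Longrightarrow> vdeg S (var x) \<le> vdeg S w"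
    and major: "ld S (comp x) \<le> ld S x"
    and IH: "\<And>G :: 'v lit set set. min_unsat G \<Longrightarrow> G \<noteq> {{}} \<Longrightarrow>
      nat (deficiency G) < nat (deficiency S) \<Longrightarrow> \<exists>w\<in>vars G. vdeg G w \<le> NM (nat (deficiency G))"
  shows "ld S x \<le> nat (deficiency S) \<and> vdeg S (var x) \<le> NM (nat (deficiency S))"
proof -
  define i where "i = ld S x"
  define k where "k = nat (deficiency S)"
  have mu: "min_unsat S"
    using sat unfolding saturated_def by blast
  have vars: "vars (assign x S) = vars S - {var x}"
    using vars_assign_min_vdeg[OF mu x min] .
  have mu_assign: "min_unsat (assign x S)"
    using saturated_min_unsat_assign[OF sat x] .
  have "deficiency (assign x S) = int k - int i + 1"
    using deficiency_assign[OF mu x vars] min_unsat_deficiency_pos[OF mu] unfolding i_def k_def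
    by simp
  moreover have "1 \<le> deficiency (assign x S)"
    using min_unsat_deficiency_pos[OF mu_assign] .
  ultimately have ik: "i \<le> k" and def_assign: "nat (deficiency (assign x S)) = k - i + 1"
    by linarith+
  have deg2: "vdeg S (var x) \<le> 2 * i"
    using vdeg_var[of S x] major unfolding i_def by simp
  have "vdeg S (var x) \<le> NM k"
  proof (cases "i \<le> 1")
    case True
    then show ?thesis
      using deg2 NM_ge_2[of k] by linarith
  next
    case False
    have "assign x S \<noteq> {{}}"
      using assign_ne_empty_clause_set[OF mu _ vars] False unfolding i_def by simp
    moreover have "nat (deficiency (assign x S)) < k"
      using def_assign False ik by linarith
    ultimately obtain w where w: "w \<in> vars (assign x S)" "vdeg (assign x S) w \<le> NM (k - i + 1)"
      using IH[OF mu_assign] def_assign unfolding k_def by auto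
    have "vdeg S (var x) \<le> vdeg S w"
      using min w(1) vars by blast
    also have "\<dots> \<le> vdeg (assign x S) w + i"
      using vdeg_le_vdeg_assign[OF mu, of w x] w(1) vars unfolding i_def by blast
    also have "\<dots> \<le> NM (k - i + 1) + i"
      using w(2) by simp
    finally have "vdeg S (var x) \<le> min (2 * i) (NM (k - i + 1) + i)"
      by (rule min.boundedI[OF deg2])
    also have "\<dots> \<le> NM k"
      using False ik by (intro NM_ge_term) auto
    finally show ?thesis .
  qed
  then show ?thesis
    using ik unfolding i_def k_def by blast
qed

lemma min_unsat_exists_var_le_NM:
  fixes F :: "'v lit set set"
  assumes "min_unsat F" "F \<noteq> {{}}"
  shows "\<exists>v\<in>vars F. vdeg F v \<le> NM (nat (deficiency F)) \<and>
    ld F (Pos v) \<le> nat (deficiency F) \<and> ld F (Neg v) \<le> nat (deficiency F)"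
  using assms
proof (induction "nat (deficiency F)" arbitrary: F rule: less_induct)
  case less
  obtain S where sat: "saturated S" and vars: "vars S = vars F" and ext: "extends_clausewise F S"
    using exists_saturated_extension[OF less.prems(1)] by blast
  have fin: "finite S"
    using sat min_unsat_is_clause_set unfolding saturated_def is_clause_set_def by blast
  have def_eq: "deficiency S = deficiency F"
    using extends_clausewise_card[OF ext] vars unfolding deficiency_def by simp
  have "vars S \<noteq> {}"
    using min_unsat_vars_nonempty[OF less.prems] vars by simp
  then obtain v0 where "v0 \<in> vars S"
    by blast
  then obtain v where v: "v \<in> vars S" and min: "\<And>w. w \<in> vars S \<Longrightarrow> vdeg S v \<le> vdeg S w"
    using ex_has_least_nat[of "\<lambda>w. w \<in> vars S" v0 "vdeg S"] by blast
  obtain x where x: "var x = v" "ld S (Pos v) \<le> ld S x" "ld S (Neg v) \<le> ld S x"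
    using exists_lit_max_ld[of v S] by blast
  have IH: "\<exists>w\<in>vars G. vdeg G w \<le> NM (nat (deficiency G))"
    if "min_unsat G" "G \<noteq> {{}}" "nat (deficiency G) < nat (deficiency S)" for G :: "'v lit set set"
    using less.hyps[of G] that def_eq by auto
  have "var x \<in> vars S" "\<And>w. w \<in> vars S \<Longrightarrow> vdeg S (var x) \<le> vdeg S w"
    using v min x(1) by simp_all
  moreover have "ld S (comp x) \<le> ld S x"
    using x by (cases x) auto
  ultimately have "ld S x \<le> nat (deficiency S) \<and> vdeg S (var x) \<le> NM (nat (deficiency S))"
    by (rule saturated_min_vdeg_le_NM[OF sat _ _ _ IH])
  then have bound: "ld S x \<le> nat (deficiency F)" "vdeg S v \<le> NM (nat (deficiency F))"
    using x(1) def_eq by simp_all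
  have "ld F (Pos v) \<le> ld S (Pos v)" "ld F (Neg v) \<le> ld S (Neg v)" "vdeg F v \<le> vdeg S v"
    using extends_clausewise_ld[OF ext fin] extends_clausewise_vdeg[OF ext fin] by blast+
  then have "vdeg F v \<le> NM (nat (deficiency F))"
    "ld F (Pos v) \<le> nat (deficiency F)" "ld F (Neg v) \<le> nat (deficiency F)"
    using bound x(2,3) by linarith+
  moreover have "v \<in> vars F"
    using v vars by simp
  ultimately show ?case
    by blast
qed

theorem theorem8p3:
  fixes F :: "'v lit set set" and k :: nat
  assumes "k \<ge> 1"
    and "min_unsat F"
    and "deficiency F \<le> int k"
    and "F \<noteq> {{}}"
  shows "minvdeg F \<le> enat (NM k) \<and>
         (\<exists>v \<in> vars F. vdeg F v \<le> NM k \<and> ld F (Pos v) \<le> k \<and> ld F (Neg v) \<le> k)"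
proof -
  have k: "nat (deficiency F) \<le> k"
    using assms(3) by linarith
  obtain v where v: "v \<in> vars F" "vdeg F v \<le> NM (nat (deficiency F))"
    "ld F (Pos v) \<le> nat (deficiency F)" "ld F (Neg v) \<le> nat (deficiency F)"
    using min_unsat_exists_var_le_NM[OF assms(2,4)] by blast
  have deg: "vdeg F v \<le> NM k"
    using v(2) NM_mono[OF k] by (rule order_trans)
  have "Min (vdeg F ` vars F) \<le> vdeg F v"
    using is_clause_set_finite_vars[OF min_unsat_is_clause_set[OF assms(2)]] v(1) by simp
  then have "minvdeg F \<le> enat (NM k)"
    using v(1) deg unfolding minvdeg_def by auto
  moreover have "ld F (Pos v) \<le> k" "ld F (Neg v) \<le> k"
    using v(3,4) k by linarith+
  ultimately show ?thesis
    using v(1) deg by blast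
qed

end
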